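(* Let $\delta>0$, $m>64\pi^2$, $\kappa>0$, $\mu^\star>0$, and let $\varepsilon\in(0,1)$, $\ell>0$, $\gamma>0$ satisfy: $\ell\ge\delta$; $-2^5\xi^2+(\mu^\star\varepsilon+6\ell)\xi-(\gamma+1)\ell\le0$ for all $\xi\in\mathbb{R}$; $2\gamma^2-3\ell\ge0$; $e^\varepsilon<\frac{1+2\kappa}{1+\kappa}$; $e^{(\gamma+1)\varepsilon}(1+3\varepsilon^3)<\frac{m}{64\pi^2}$; and $e^{(\ell-\delta)t}(1+(\varepsilon-\ell t)^3)\ge1+\varepsilon^3$ for all $t\in(0,\varepsilon/\ell)$. Put $\tau(t)=\varepsilon-\ell t$, $a(t)=2^5e^{(\gamma+1)\tau}$, $b(t)=8e^{\tau}$ and $$\underline U(s,t):=\frac{a(s^{3/2}+3\tau^3s)}{(s^{1/2}+\tau^3)^3},\qquad \underline W(s,t):=\frac{bs}{s^{1/2}+\tau^3},\qquad(s,t)\in[0,1]\times[0,\varepsilon/\ell).$$ Then for each $t\in[0,\varepsilon/\ell)$ the map $s\mapsto\underline W(s,t)$ on $[0,1]$ is nonnegative, increasing and concave; $\underline W(0,t)=0$ for all $t\in[0,\varepsilon/\ell)$; $$\sup_{t\in(0,\varepsilon/\ell)}\underline W(1,t)<8\cdot\frac{1+2\kappa}{1+\kappa};$$ and $\mathcal Q(\underline U,\underline W)\le0$ for all $(s,t)\in(0,1)\times(0,\varepsilon/\ell)$.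
   Context: For functions $\phi,\psi$ the operator $\mathcal Q$ is $\mathcal Q(\phi,\psi):=\psi_t-16s^{3/2}\psi_{ss}+\delta\psi-\phi$. *)

theory Defs
  imports "HOL-Analysis.Analysis"
begin

definition Qop :: "real \<Rightarrow> (real \<Rightarrow> real \<Rightarrow> real) \<Rightarrow> (real \<Rightarrow> real \<Rightarrow> real) \<Rightarrow> real \<Rightarrow> real \<Rightarrow> real" where
  "Qop \<delta> \<phi> \<psi> s t =
     deriv (\<lambda>t'. \<psi> s t') t - 16 * s powr (3/2) * deriv (deriv (\<lambda>s'. \<psi> s' t)) s
     + \<delta> * \<psi> s t - \<phi> s t"

definition tau :: "real \<Rightarrow> real \<Rightarrow> real \<Rightarrow> real" where
  "tau \<epsilon> l t = \<epsilon> - l * t"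

definition acoef :: "real \<Rightarrow> real \<Rightarrow> real \<Rightarrow> real \<Rightarrow> real" where
  "acoef \<epsilon> l \<gamma> t = 2^5 * exp ((\<gamma> + 1) * tau \<epsilon> l t)"

definition bcoef :: "real \<Rightarrow> real \<Rightarrow> real \<Rightarrow> real" where
  "bcoef \<epsilon> l t = 8 * exp (tau \<epsilon> l t)"

definition Ulow :: "real \<Rightarrow> real \<Rightarrow> real \<Rightarrow> real \<Rightarrow> real \<Rightarrow> real" where
  "Ulow \<epsilon> l \<gamma> s t =
     acoef \<epsilon> l \<gamma> t * (s powr (3/2) + 3 * (tau \<epsilon> l t)^3 * s) / (sqrt s + (tau \<epsilon> l t)^3)^3"

definition Wlow :: "real \<Rightarrow> real \<Rightarrow> real \<Rightarrow> real \<Rightarrow> real" where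
  "Wlow \<epsilon> l s t = bcoef \<epsilon> l t * s / (sqrt s + (tau \<epsilon> l t)^3)"

end

theory Submission
  imports Defs
begin

text \<open>For fixed t, W is the function s \<mapsto> B s / (sqrt s + c) with B = 8 exp \<tau> and c = \<tau>^3 > 0.
  Its derivative B (sqrt s + 2 c) / (2 (sqrt s + c)^2) is positive and decreasing on [0, \<infinity>), which
  gives monotonicity and concavity, and W(1, t) = B / (1 + c) \<le> 8 exp \<tau> \<le> 8 exp \<epsilon>.
  Writing y = sqrt s + \<tau>^3, every term of Q(U, W) carries the positive factor 8 exp \<tau> s / y^3, and
  the remaining factor (\<delta> - l) y^2 + 3 l \<tau>^2 y + 4 (1 - exp (\<gamma> \<tau>)) (sqrt s + 3 \<tau>^3) is
  nonpositive because \<delta> \<le> l and exp (\<gamma> \<tau>) - 1 \<ge> \<gamma>^2 \<tau>^2 / 2 with 2 \<gamma>^2 \<ge> 3 l.\<close>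

lemma DERIV_sqrt_ratio:
  fixes B c s :: real
  assumes "c > 0" "s \<ge> 0"
  shows "((\<lambda>s. B * s / (sqrt s + c)) has_real_derivative
           B * (sqrt s + 2 * c) / (2 * (sqrt s + c)^2)) (at s)"
proof (cases "s = 0")
  case True
  \<comment> \<open>sqrt is not differentiable at 0, but the difference quotient of the ratio is B / (sqrt h + c).\<close>
  have "((\<lambda>h. B / (sqrt h + c)) \<longlongrightarrow> B / (sqrt 0 + c)) (at 0)"
    using assms by (intro tendsto_intros) auto
  then have "((\<lambda>h. B / (sqrt h + c)) \<longlongrightarrow> B / c) (at 0)"
    by simp
  then have "((\<lambda>h. (B * h / (sqrt h + c) - B * 0 / (sqrt 0 + c)) / h) \<longlongrightarrow> B / c) (at 0)"
    by (rule Lim_transform_within[where d=1]) auto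
  then show ?thesis
    using True assms by (simp add: has_field_derivative_iff power2_eq_square)
next
  case False
  define x where "x = sqrt s"
  have x: "x > 0" "s = x^2" "x + c > 0"
    using assms False by (auto simp: x_def intro: add_nonneg_pos)
  show ?thesis
    using x by (auto intro!: derivative_eq_intros simp: x_def[symmetric] field_simps power2_eq_square)
qed

lemma deriv2_sqrt_ratio:
  fixes B c s :: real
  assumes "c > 0" "s > 0"
  shows "deriv (deriv (\<lambda>s. B * s / (sqrt s + c))) s
           = - B * (sqrt s + 3 * c) / (4 * sqrt s * (sqrt s + c)^3)"
proof (rule DERIV_imp_deriv)
  have x: "sqrt s > 0" "sqrt s + c > 0"
    using assms by (auto intro: add_nonneg_pos)
  have "((\<lambda>x. B * (x + 2 * c) / (2 * (x + c)^2)) has_real_derivative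
           - B * (x + 3 * c) / (2 * (x + c)^3)) (at x)" if "x + c > 0" for x
    using that by (auto intro!: derivative_eq_intros simp: divide_simps) (simp add: algebra_simps eval_nat_numeral)
  from DERIV_chain2[OF this[OF x(2)] DERIV_real_sqrt[OF assms(2)]]
  have "((\<lambda>s. B * (sqrt s + 2 * c) / (2 * (sqrt s + c)^2)) has_real_derivative
           - B * (sqrt s + 3 * c) / (4 * sqrt s * (sqrt s + c)^3)) (at s)"
    using x by (simp add: field_simps)
  then show "(deriv (\<lambda>s. B * s / (sqrt s + c)) has_real_derivative
           - B * (sqrt s + 3 * c) / (4 * sqrt s * (sqrt s + c)^3)) (at s)"
    by (rule has_field_derivative_transform_within_open[where S="{0<..}"])
      (use assms DERIV_sqrt_ratio in \<open>auto intro!: DERIV_imp_deriv[symmetric]\<close>)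
qed

lemma sqrt_ratio_strict_mono_on:
  fixes B c :: real
  assumes "c > 0" "B > 0"
  shows "strict_mono_on {0..} (\<lambda>s. B * s / (sqrt s + c))"
proof (rule strict_mono_onI)
  fix r s :: real assume "r \<in> {0..}" "r < s"
  have "DERIV (\<lambda>s. B * s / (sqrt s + c)) x :> B * (sqrt x + 2 * c) / (2 * (sqrt x + c)^2)
        \<and> B * (sqrt x + 2 * c) / (2 * (sqrt x + c)^2) > 0" if "r \<le> x" for x
  proof
    from that \<open>r \<in> {0..}\<close> have "x \<ge> 0" by simp
    then show "DERIV (\<lambda>s. B * s / (sqrt s + c)) x :> B * (sqrt x + 2 * c) / (2 * (sqrt x + c)^2)"
      by (rule DERIV_sqrt_ratio[OF assms(1)])
    have "sqrt x + c > 0"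
      using \<open>x \<ge> 0\<close> assms by (intro add_nonneg_pos) auto
    then show "B * (sqrt x + 2 * c) / (2 * (sqrt x + c)^2) > 0"
      using assms by simp
  qed
  then show "B * r / (sqrt r + c) < B * s / (sqrt s + c)"
    by (intro DERIV_pos_imp_increasing[OF \<open>r < s\<close>]) blast
qed

lemma divide_square_antimono:
  fixes a b c :: real
  assumes "0 < a" "a \<le> b" "0 \<le> c"
  shows "(b + c) / b^2 \<le> (a + c) / a^2"
proof -
  have "1 / b + c / b^2 \<le> 1 / a + c / a^2"
    using assms by (intro add_mono divide_left_mono power_mono mult_pos_pos frac_le) auto
  then show ?thesis
    using assms by (simp add: add_divide_distrib power2_eq_square)
qed

lemma sqrt_ratio_concave_on:
  fixes B c :: real
  assumes "c > 0" "B \<ge> 0"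
  shows "concave_on {0..} (\<lambda>s. B * s / (sqrt s + c))"
  unfolding concave_on_def
proof (rule convex_on_realI[where f'="\<lambda>s. - (B * (sqrt s + 2 * c) / (2 * (sqrt s + c)^2))"])
  fix x y :: real assume "x \<in> {0..}" "x \<le> y"
  then have "0 < sqrt x + c" "sqrt x + c \<le> sqrt y + c"
    using assms by (auto intro: add_nonneg_pos)
  then have "(sqrt y + c + c) / (sqrt y + c)^2 \<le> (sqrt x + c + c) / (sqrt x + c)^2"
    using assms by (intro divide_square_antimono) auto
  then have "B / 2 * ((sqrt y + c + c) / (sqrt y + c)^2) \<le> B / 2 * ((sqrt x + c + c) / (sqrt x + c)^2)"
    using assms by (intro mult_left_mono) auto
  moreover have "B * (u + 2 * c) / (2 * (u + c)^2) = B / 2 * ((u + c + c) / (u + c)^2)" for u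
    by (metis mult_2 add.assoc times_divide_times_eq)
  ultimately show "- (B * (sqrt x + 2 * c) / (2 * (sqrt x + c)^2)) \<le> - (B * (sqrt y + 2 * c) / (2 * (sqrt y + c)^2))"
    by (metis neg_le_iff_le)
next
  fix x :: real assume "x \<in> {0..}"
  then show "((\<lambda>s. - (B * s / (sqrt s + c))) has_real_derivative
               - (B * (sqrt x + 2 * c) / (2 * (sqrt x + c)^2))) (at x)"
    using DERIV_sqrt_ratio[OF assms(1)] by (intro DERIV_minus) simp
qed simp

lemma tau_pos:
  fixes \<epsilon> l t :: real
  assumes "l > 0" "t < \<epsilon> / l"
  shows "tau \<epsilon> l t > 0"
  using assms by (simp add: tau_def field_simps)

lemma Wlow_nonneg_strict_mono_concave:
  fixes \<epsilon> l t :: real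
  assumes "tau \<epsilon> l t > 0"
  shows "(\<forall>s\<in>{0..1}. Wlow \<epsilon> l s t \<ge> 0)
          \<and> strict_mono_on {0..1} (\<lambda>s. Wlow \<epsilon> l s t)
          \<and> concave_on {0..1} (\<lambda>s. Wlow \<epsilon> l s t)"
proof -
  have W: "(\<lambda>s. Wlow \<epsilon> l s t) = (\<lambda>s. bcoef \<epsilon> l t * s / (sqrt s + (tau \<epsilon> l t)^3))"
    by (simp add: Wlow_def)
  have c: "(tau \<epsilon> l t)^3 > 0" and B: "bcoef \<epsilon> l t > 0"
    using assms by (auto simp: bcoef_def)
  have "\<forall>s\<in>{0..1}. Wlow \<epsilon> l s t \<ge> 0"
    using B c by (auto simp: Wlow_def intro!: divide_nonneg_pos add_nonneg_pos)
  moreover have "strict_mono_on {0..1} (\<lambda>s. Wlow \<epsilon> l s t)"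
    unfolding W by (rule monotone_on_subset[OF sqrt_ratio_strict_mono_on[OF c B]]) auto
  moreover have "concave_on {0..1} (\<lambda>s. Wlow \<epsilon> l s t)"
    using sqrt_ratio_concave_on[OF c less_imp_le[OF B]] unfolding W concave_on_def
    by (rule convex_on_subset) auto
  ultimately show ?thesis
    by blast
qed

lemma Wlow_one_le_exp:
  fixes \<epsilon> l t :: real
  assumes "tau \<epsilon> l t > 0" "l * t \<ge> 0"
  shows "Wlow \<epsilon> l 1 t \<le> 8 * exp \<epsilon>"
proof -
  have "Wlow \<epsilon> l 1 t = 8 * exp (tau \<epsilon> l t) / (1 + (tau \<epsilon> l t)^3)"
    by (simp add: Wlow_def bcoef_def)
  also have "\<dots> \<le> 8 * exp (tau \<epsilon> l t)"
    using assms by (simp add: divide_le_eq add_pos_pos)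
  also have "\<dots> \<le> 8 * exp \<epsilon>"
    using assms by (simp add: tau_def)
  finally show ?thesis .
qed

lemma SUP_Wlow_one_le_exp:
  fixes \<epsilon> l :: real
  assumes "\<epsilon> > 0" "l > 0"
  shows "(SUP t\<in>{0<..<\<epsilon>/l}. Wlow \<epsilon> l 1 t) \<le> 8 * exp \<epsilon>"
proof (rule cSUP_least)
  show "{0<..<\<epsilon>/l} \<noteq> {}"
    using divide_pos_pos[OF assms] by simp
  fix t assume "t \<in> {0<..<\<epsilon>/l}"
  then show "Wlow \<epsilon> l 1 t \<le> 8 * exp \<epsilon>"
    using assms tau_pos by (intro Wlow_one_le_exp) auto
qed

lemma DERIV_Wlow_time:
  fixes \<epsilon> l s t :: real
  assumes "s \<ge> 0" "tau \<epsilon> l t > 0"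
  shows "((\<lambda>t. Wlow \<epsilon> l s t) has_real_derivative
           l * Wlow \<epsilon> l s t * (3 * (tau \<epsilon> l t)^2 / (sqrt s + (tau \<epsilon> l t)^3) - 1)) (at t)"
proof -
  have outer: "((\<lambda>T. 8 * exp T * s / (sqrt s + T^3)) has_real_derivative
          8 * exp T * s / (sqrt s + T^3) * (1 - 3 * T^2 / (sqrt s + T^3))) (at T)"
    if "sqrt s + T^3 > 0" for T
    using that by (auto intro!: derivative_eq_intros simp: field_simps power2_eq_square)
  have "sqrt s + (tau \<epsilon> l t)^3 > 0"
    using assms by (intro add_nonneg_pos) auto
  moreover have "((tau \<epsilon> l) has_real_derivative - l) (at t)"
    unfolding tau_def by (auto intro!: derivative_eq_intros)
  ultimately have "((\<lambda>t. 8 * exp (tau \<epsilon> l t) * s / (sqrt s + (tau \<epsilon> l t)^3)) has_real_derivative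
          8 * exp (tau \<epsilon> l t) * s / (sqrt s + (tau \<epsilon> l t)^3)
            * (1 - 3 * (tau \<epsilon> l t)^2 / (sqrt s + (tau \<epsilon> l t)^3)) * - l) (at t)"
    by (intro DERIV_chain2[OF outer])
  then have "((\<lambda>t. Wlow \<epsilon> l s t) has_real_derivative
      Wlow \<epsilon> l s t * (1 - 3 * (tau \<epsilon> l t)^2 / (sqrt s + (tau \<epsilon> l t)^3)) * - l) (at t)"
    by (simp only: Wlow_def bcoef_def)
  moreover have "Wlow \<epsilon> l s t * (1 - R) * - l = l * Wlow \<epsilon> l s t * (R - 1)" for R
    by (simp add: algebra_simps)
  ultimately show ?thesis
    by metis
qed

lemma subsolution_bracket_nonpos:
  fixes x T l \<delta> \<gamma> :: real
  assumes "x \<ge> 0" "T > 0" "\<delta> \<le> l" "3 * l \<le> 2 * \<gamma>^2" "\<gamma> \<ge> 0"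
  shows "(\<delta> - l) * (x + T^3)^2 + 3 * l * T^2 * (x + T^3)
           + 4 * (1 - exp (\<gamma> * T)) * (x + 3 * T^3) \<le> 0"
proof -
  have T3: "T^3 > 0"
    using assms by simp
  have "\<gamma> * T \<ge> 0"
    using assms by simp
  then have "(\<gamma> * T)^2 / 2 \<le> exp (\<gamma> * T) - 1"
    using exp_lower_Taylor_quadratic[of "\<gamma> * T"] by linarith
  then have "4 * (1 - exp (\<gamma> * T)) * (x + 3 * T^3) \<le> - (2 * \<gamma>^2 * T^2) * (x + 3 * T^3)"
    using assms T3 by (intro mult_right_mono) (auto simp: power_mult_distrib)
  also have "\<dots> = - (2 * \<gamma>^2 * T^2 * (x + 3 * T^3))"
    by simp
  finally have "4 * (1 - exp (\<gamma> * T)) * (x + 3 * T^3) \<le> - (2 * \<gamma>^2 * T^2 * (x + 3 * T^3))" .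
  moreover have "3 * l * T^2 \<le> 2 * \<gamma>^2 * T^2"
    by (rule mult_right_mono[OF assms(4)]) simp
  then have "3 * l * T^2 * (x + T^3) \<le> 2 * \<gamma>^2 * T^2 * (x + 3 * T^3)"
    by (rule mult_mono) (use assms T3 in auto)
  moreover have "(\<delta> - l) * (x + T^3)^2 \<le> 0"
    using assms by (simp add: mult_nonpos_nonneg)
  ultimately show ?thesis
    by linarith
qed

lemma Qop_Ulow_Wlow:
  fixes \<delta> \<epsilon> l \<gamma> s t T :: real
  assumes "s > 0" "tau \<epsilon> l t = T" "T > 0"
  shows "Qop \<delta> (Ulow \<epsilon> l \<gamma>) (Wlow \<epsilon> l) s t =
           8 * exp T * s / (sqrt s + T^3)^3 *
             ((\<delta> - l) * (sqrt s + T^3)^2 + 3 * l * T^2 * (sqrt s + T^3)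
               + 4 * (1 - exp (\<gamma> * T)) * (sqrt s + 3 * T^3))"
proof -
  define y where "y = sqrt s + T^3"
  define F where "F = 8 * exp T * s / y^3"
  have pos: "sqrt s > 0" "y > 0"
    using assms by (auto simp: y_def intro: add_pos_pos)
  have W: "Wlow \<epsilon> l s' t = 8 * exp T * s' / (sqrt s' + T^3)" for s'
    using assms by (simp add: Wlow_def bcoef_def)
  have W_F: "Wlow \<epsilon> l s t = F * y^2"
    unfolding W y_def[symmetric] F_def using pos by (simp add: field_simps power3_eq_cube power2_eq_square)
  have "deriv (\<lambda>t. Wlow \<epsilon> l s t) t = l * Wlow \<epsilon> l s t * (3 * T^2 / y - 1)"
    using DERIV_Wlow_time[of s \<epsilon> l t] assms by (simp add: DERIV_imp_deriv y_def)
  also have "\<dots> = F * (3 * l * T^2 * y - l * y^2)"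
    using pos by (simp add: W_F field_simps power2_eq_square)
  finally have Wt: "deriv (\<lambda>t. Wlow \<epsilon> l s t) t = F * (3 * l * T^2 * y - l * y^2)" .
  have "s powr (3/2) = s powr (1 + 1/2)"
    by simp
  also have "\<dots> = s * sqrt s"
    unfolding powr_add using assms by (simp add: powr_half_sqrt)
  finally have powr: "s powr (3/2) = s * sqrt s" .
  have Wss_eq: "deriv (deriv (\<lambda>s. Wlow \<epsilon> l s t)) s
          = - (8 * exp T) * (sqrt s + 3 * T^3) / (4 * sqrt s * y^3)"
    unfolding W y_def using deriv2_sqrt_ratio[of "T^3" s "8 * exp T"] assms by simp
  have Wss: "16 * s powr (3/2) * deriv (deriv (\<lambda>s. Wlow \<epsilon> l s t)) s
                    = - F * (4 * (sqrt s + 3 * T^3))"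
    unfolding powr Wss_eq F_def using pos by (simp add: field_simps)
  have U: "Ulow \<epsilon> l \<gamma> s t = F * (4 * exp (\<gamma> * T) * (sqrt s + 3 * T^3))"
    using assms pos
    by (simp add: Ulow_def acoef_def powr F_def y_def[symmetric] distrib_right exp_add field_simps)
  show ?thesis
    unfolding Qop_def Wt Wss U W_F y_def[symmetric] F_def[symmetric] by (simp add: algebra_simps)
qed

lemma Qop_Ulow_Wlow_nonpos:
  fixes \<delta> \<epsilon> l \<gamma> s t :: real
  assumes "\<delta> \<le> l" "3 * l \<le> 2 * \<gamma>^2" "\<gamma> \<ge> 0" "s > 0" "tau \<epsilon> l t > 0"
  shows "Qop \<delta> (Ulow \<epsilon> l \<gamma>) (Wlow \<epsilon> l) s t \<le> 0"
proof -
  have "8 * exp (tau \<epsilon> l t) * s / (sqrt s + (tau \<epsilon> l t)^3)^3 \<ge> 0"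
    using assms by (intro divide_nonneg_nonneg zero_le_power add_nonneg_nonneg) auto
  moreover have "(\<delta> - l) * (sqrt s + (tau \<epsilon> l t)^3)^2 + 3 * l * (tau \<epsilon> l t)^2 * (sqrt s + (tau \<epsilon> l t)^3)
             + 4 * (1 - exp (\<gamma> * tau \<epsilon> l t)) * (sqrt s + 3 * (tau \<epsilon> l t)^3) \<le> 0"
    using assms by (intro subsolution_bracket_nonpos) auto
  ultimately show ?thesis
    unfolding Qop_Ulow_Wlow[OF \<open>s > 0\<close> refl \<open>tau \<epsilon> l t > 0\<close>] by (rule mult_nonneg_nonpos)
qed

theorem lemma3p6:
  fixes \<delta> m \<kappa> mus \<epsilon> l \<gamma> :: real
  assumes "\<delta> > 0" and "m > 64 * pi^2" and "\<kappa> > 0" and "mus > 0"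
    and "0 < \<epsilon>" and "\<epsilon> < 1" and "l > 0" and "\<gamma> > 0"
    and "l \<ge> \<delta>"
    and "\<forall>\<xi>::real. - (2^5) * \<xi>^2 + (mus * \<epsilon> + 6 * l) * \<xi> - (\<gamma> + 1) * l \<le> 0"
    and "2 * \<gamma>^2 - 3 * l \<ge> 0"
    and "exp \<epsilon> < (1 + 2 * \<kappa>) / (1 + \<kappa>)"
    and "exp ((\<gamma> + 1) * \<epsilon>) * (1 + 3 * \<epsilon>^3) < m / (64 * pi^2)"
    and "\<forall>t\<in>{0<..<\<epsilon>/l}. exp ((l - \<delta>) * t) * (1 + (\<epsilon> - l * t)^3) \<ge> 1 + \<epsilon>^3"
  shows "(\<forall>t\<in>{0..<\<epsilon>/l}.
            (\<forall>s\<in>{0..1}. Wlow \<epsilon> l s t \<ge> 0)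
          \<and> strict_mono_on {0..1} (\<lambda>s. Wlow \<epsilon> l s t)
          \<and> concave_on {0..1} (\<lambda>s. Wlow \<epsilon> l s t))
    \<and> (\<forall>t\<in>{0..<\<epsilon>/l}. Wlow \<epsilon> l 0 t = 0)
    \<and> (SUP t\<in>{0<..<\<epsilon>/l}. Wlow \<epsilon> l 1 t) < 8 * ((1 + 2 * \<kappa>) / (1 + \<kappa>))
    \<and> (\<forall>s\<in>{0<..<1}. \<forall>t\<in>{0<..<\<epsilon>/l}.
          Qop \<delta> (Ulow \<epsilon> l \<gamma>) (Wlow \<epsilon> l) s t \<le> 0)"
proof -
  have "(SUP t\<in>{0<..<\<epsilon>/l}. Wlow \<epsilon> l 1 t) < 8 * ((1 + 2 * \<kappa>) / (1 + \<kappa>))"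
    using SUP_Wlow_one_le_exp[OF \<open>\<epsilon> > 0\<close> \<open>l > 0\<close>] \<open>exp \<epsilon> < (1 + 2 * \<kappa>) / (1 + \<kappa>)\<close>
    by linarith
  moreover have "Wlow \<epsilon> l 0 t = 0" for t
    by (simp add: Wlow_def)
  moreover have "\<delta> \<le> l" "3 * l \<le> 2 * \<gamma>^2" "\<gamma> \<ge> 0"
    using assms by auto
  ultimately show ?thesis
    using tau_pos[OF \<open>l > 0\<close>]
    by (auto intro!: Wlow_nonneg_strict_mono_concave Qop_Ulow_Wlow_nonpos)
qed

end
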